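(* For every $A$-lattice $\Lambda$ of rank $r$ in $C_\infty$, the subgroup $\operatorname{sgn}(\Lambda)$ of the group of roots of unity of $C_\infty$ generated by $\{\operatorname{sgn}(\lambda):0\neq\lambda\in\Lambda\}$ is finite.
   Context: $\mathbb{F}=\mathbb{F}_q$; $K$ a global function field with exact constant field $\mathbb{F}$; $\infty$ a place of degree $d_\infty$; $A$ the ring of elements of $K$ regular off $\infty$; $C_\infty$ the completed algebraic closure of $K_\infty$ with $|\pi|^{-1}=q^{d_\infty}$ for a fixed uniformizer $\pi\in K$; $\log x=\log_q|x|$. Rank-$r$ $A$-lattices in $C_\infty$ are finitely generated discrete $A$-submodules of rank $r$. Fix compatible roots $\pi^{1/n}$ so that $\pi^x$ is defined for $x\in\mathbb{Q}$. For $|z|=1$, $\operatorname{sgn}(z)$ is the unique root of unity with $|z/\operatorname{sgn}(z)-1|<1$; for $z\in C_\infty^*$, $\operatorname{sgn}(z):=\operatorname{sgn}(z\pi^{\log z/d_\infty})$. *)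

theory Defs
  imports Complex_Main "HOL-Computational_Algebra.Polynomial"
begin

text \<open>The ambient field C_infinity is modelled as a type 'c of class field together with
  an absolute value absv on it.  All arithmetic notions are relative to this.\<close>

definition is_subfield :: "'c::field set \<Rightarrow> bool" where
  "is_subfield S \<longleftrightarrow> 0 \<in> S \<and> 1 \<in> S \<and> (\<forall>x\<in>S. \<forall>y\<in>S. x + y \<in> S \<and> x * y \<in> S)
     \<and> (\<forall>x\<in>S. - x \<in> S \<and> inverse x \<in> S)"

definition algebraic_over :: "'c::field set \<Rightarrow> 'c \<Rightarrow> bool" where
  "algebraic_over S x \<longleftrightarrow> (\<exists>p. p \<noteq> 0 \<and> set (coeffs p) \<subseteq> S \<and> poly p x = 0)"

definition abs_value_on :: "'c::field set \<Rightarrow> ('c \<Rightarrow> real) \<Rightarrow> bool" where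
  "abs_value_on S v \<longleftrightarrow> (\<forall>x\<in>S. v x \<ge> 0 \<and> (v x = 0 \<longleftrightarrow> x = 0))
     \<and> (\<forall>x\<in>S. \<forall>y\<in>S. v (x * y) = v x * v y \<and> v (x + y) \<le> v x + v y)"

definition nontrivial_on :: "'c::field set \<Rightarrow> ('c \<Rightarrow> real) \<Rightarrow> bool" where
  "nontrivial_on S v \<longleftrightarrow> (\<exists>x\<in>S. x \<noteq> 0 \<and> v x \<noteq> 1)"

definition equiv_abs_on :: "'c::field set \<Rightarrow> ('c \<Rightarrow> real) \<Rightarrow> ('c \<Rightarrow> real) \<Rightarrow> bool" where
  "equiv_abs_on S v w \<longleftrightarrow> (\<exists>s>0. \<forall>x\<in>S. w x = v x powr s)"

definition rat_fun_field :: "'c::field set \<Rightarrow> 'c \<Rightarrow> 'c set" where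
  "rat_fun_field F t = {poly p t / poly q t | p q. set (coeffs p) \<subseteq> F \<and> set (coeffs q) \<subseteq> F \<and> poly q t \<noteq> 0}"

text \<open>K is a global function field with exact constant field F (F finite):
  K is a finite extension of F(t) for some t transcendental over F, and F is
  algebraically closed in K.\<close>
definition global_function_field :: "'c::field set \<Rightarrow> 'c set \<Rightarrow> bool" where
  "global_function_field F K \<longleftrightarrow> is_subfield F \<and> finite F \<and> is_subfield K \<and> F \<subseteq> K
     \<and> (\<exists>t\<in>K. \<not> algebraic_over F t \<and>
          (\<exists>B. finite B \<and> B \<subseteq> K \<and>
              K = {\<Sum>b\<in>B. c b * b | c. \<forall>b\<in>B. c b \<in> rat_fun_field F t}))
     \<and> (\<forall>x\<in>K. algebraic_over F x \<longrightarrow> x \<in> F)"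

text \<open>The ring A of elements of K regular away from the place infinity (given by absv):
  |x|_v \<le> 1 for every place v of K (trivial on F) other than infinity.\<close>
definition ring_A :: "('c::field \<Rightarrow> real) \<Rightarrow> 'c set \<Rightarrow> 'c set \<Rightarrow> 'c set" where
  "ring_A absv F K = {x\<in>K. \<forall>v. abs_value_on K v \<and> nontrivial_on K v \<and> (\<forall>y\<in>F. y \<noteq> 0 \<longrightarrow> v y = 1)
        \<and> \<not> equiv_abs_on K absv v \<longrightarrow> v x \<le> 1}"

definition closure_abs :: "('c::field \<Rightarrow> real) \<Rightarrow> 'c set \<Rightarrow> 'c set" where
  "closure_abs absv S = {x. \<forall>e>0. \<exists>s\<in>S. absv (x - s) < e}"

text \<open>Degree of the place infinity: residue field of K at infinity has q^d elements.\<close>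
definition residue_field_inf :: "('c::field \<Rightarrow> real) \<Rightarrow> 'c set \<Rightarrow> 'c set set" where
  "residue_field_inf absv K =
     {x\<in>K. absv x \<le> 1} // {(x, y). x \<in> K \<and> y \<in> K \<and> absv x \<le> 1 \<and> absv y \<le> 1 \<and> absv (x - y) < 1}"

text \<open>The standing setting: absv is a nonarchimedean absolute value on C; C is complete
  and algebraically closed, and the algebraic closure of K_infinity (closure of K) is dense
  in C, i.e. C = C_infinity; F = F_q is the exact constant field of the global function field
  K; the restriction of absv to K is the place infinity of degree d; pi in K is a uniformizer
  with |pi|^{-1} = q^d; rho x = pi^x for rational x is a compatible system of roots.\<close>
definition drinfeld_setting ::
  "('c::field \<Rightarrow> real) \<Rightarrow> 'c set \<Rightarrow> 'c set \<Rightarrow> nat \<Rightarrow> nat \<Rightarrow> 'c \<Rightarrow> (rat \<Rightarrow> 'c) \<Rightarrow> bool" where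
  "drinfeld_setting absv F K q d \<pi> \<rho> \<longleftrightarrow>
     abs_value_on UNIV absv \<and> (\<forall>x y. absv (x + y) \<le> max (absv x) (absv y))
     \<and> (\<forall>X::nat \<Rightarrow> 'c. (\<forall>e>0. \<exists>N. \<forall>m\<ge>N. \<forall>n\<ge>N. absv (X m - X n) < e)
            \<longrightarrow> (\<exists>L. (\<lambda>n. absv (X n - L)) \<longlonglongrightarrow> 0))
     \<and> (\<forall>p::'c poly. degree p \<ge> 1 \<longrightarrow> (\<exists>x. poly p x = 0))
     \<and> closure_abs absv {x. algebraic_over (closure_abs absv K) x} = UNIV
     \<and> global_function_field F K \<and> card F = q
     \<and> nontrivial_on K absv
     \<and> d \<ge> 1 \<and> card (residue_field_inf absv K) = q ^ d
     \<and> \<pi> \<in> K \<and> absv \<pi> < 1 \<and> (\<forall>x\<in>K. absv x < 1 \<longrightarrow> absv x \<le> absv \<pi>)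
     \<and> absv \<pi> = real q powr (- real d)
     \<and> \<rho> 1 = \<pi> \<and> (\<forall>a b. \<rho> (a + b) = \<rho> a * \<rho> b)"

definition roots_of_unity :: "'c::field set" where
  "roots_of_unity = {z. \<exists>n>0. z ^ n = 1}"

definition logq :: "('c::field \<Rightarrow> real) \<Rightarrow> nat \<Rightarrow> 'c \<Rightarrow> real" where
  "logq absv q x = log (real q) (absv x)"

definition sgn1 :: "('c::field \<Rightarrow> real) \<Rightarrow> 'c \<Rightarrow> 'c" where
  "sgn1 absv z = (THE \<zeta>. \<zeta> \<in> roots_of_unity \<and> absv (z / \<zeta> - 1) < 1)"

definition sgnC :: "('c::field \<Rightarrow> real) \<Rightarrow> nat \<Rightarrow> nat \<Rightarrow> (rat \<Rightarrow> 'c) \<Rightarrow> 'c \<Rightarrow> 'c" where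
  "sgnC absv q d \<rho> z =
     sgn1 absv (z * \<rho> (THE a. of_rat a = logq absv q z / real d))"

definition A_lin_indep :: "'c::field set \<Rightarrow> 'c set \<Rightarrow> bool" where
  "A_lin_indep A S \<longleftrightarrow> (\<forall>a. (\<forall>s\<in>S. a s \<in> A) \<and> (\<Sum>s\<in>S. a s * s) = 0 \<longrightarrow> (\<forall>s\<in>S. a s = 0))"

definition A_lattice :: "('c::field \<Rightarrow> real) \<Rightarrow> 'c set \<Rightarrow> nat \<Rightarrow> 'c set \<Rightarrow> bool" where
  "A_lattice absv A r L \<longleftrightarrow>
     \<comment> \<open>A-submodule\<close>
     0 \<in> L \<and> (\<forall>x\<in>L. \<forall>y\<in>L. x + y \<in> L) \<and> (\<forall>a\<in>A. \<forall>x\<in>L. a * x \<in> L)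
     \<comment> \<open>finitely generated\<close>
     \<and> (\<exists>G. finite G \<and> G \<subseteq> L \<and> L = {\<Sum>g\<in>G. a g * g | a. \<forall>g\<in>G. a g \<in> A})
     \<comment> \<open>discrete\<close>
     \<and> (\<exists>e>0. \<forall>x\<in>L. absv x < e \<longrightarrow> x = 0)
     \<comment> \<open>rank r: maximal number of A-linearly independent elements\<close>
     \<and> (\<exists>S. finite S \<and> S \<subseteq> L \<and> card S = r \<and> A_lin_indep A S)
     \<and> (\<forall>S. finite S \<and> S \<subseteq> L \<and> A_lin_indep A S \<longrightarrow> card S \<le> r)"

inductive_set gen_subgroup :: "'c::field set \<Rightarrow> 'c set" for X where
  one: "1 \<in> gen_subgroup X"
| gen: "x \<in> X \<Longrightarrow> x \<in> gen_subgroup X"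
| mult: "x \<in> gen_subgroup X \<Longrightarrow> y \<in> gen_subgroup X \<Longrightarrow> x * y \<in> gen_subgroup X"
| inv: "x \<in> gen_subgroup X \<Longrightarrow> inverse x \<in> gen_subgroup X"

end

theory Submission
  imports Defs "HOL-Library.FuncSet" "HOL-Computational_Algebra.Primes"
begin

text \<open>Every nonzero \<open>z\<close> has \<open>|z| = q\<^sub>\<infinity>\<^sup>a\<close> with \<open>a\<close> rational (\<open>q\<^sub>\<infinity> = q\<^sup>d\<close>), because the
  algebraic elements over \<open>K\<^sub>\<infinity>\<close> are dense and the value group of \<open>K\<close> is \<open>q\<^sub>\<infinity>\<^sup>\<int>\<close>.  The sign of \<open>z\<close>
  is the root of unity congruent to the unit \<open>z \<pi>\<^sup>a\<close> modulo the maximal ideal; it exists since the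
  residue field of \<open>C\<^sub>\<infinity>\<close> is algebraic over the finite residue field of \<open>K\<close>, and it is unique
  since in positive characteristic distinct roots of unity are incongruent.  The sign is
  multiplicative, satisfies \<open>sgn (x + y) = sgn x\<close> for \<open>|y| < |x|\<close>, and \<open>sgn (x + y) \<equiv> sgn x + sgn y\<close>
  when \<open>|x| = |y| = |x + y|\<close>; it takes finitely many values on \<open>K\<^sup>*\<close> because the residue field of
  \<open>K\<close> is finite.  A lattice lies in the \<open>K\<close>-span of finitely many generators.  Adjoining one
  generator \<open>g\<close> to a span \<open>V\<close>, the signs on the coset \<open>g + V\<close> are governed by an element of
  least absolute value in it, so only finitely many new signs arise.  Finally, finitely many
  roots of unity generate a finite group.\<close>

lemma subfield_zero: "is_subfield S \<Longrightarrow> 0 \<in> S"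
  and subfield_one: "is_subfield S \<Longrightarrow> 1 \<in> S"
  and subfield_add: "is_subfield S \<Longrightarrow> x \<in> S \<Longrightarrow> y \<in> S \<Longrightarrow> x + y \<in> S"
  and subfield_mult: "is_subfield S \<Longrightarrow> x \<in> S \<Longrightarrow> y \<in> S \<Longrightarrow> x * y \<in> S"
  and subfield_uminus: "is_subfield S \<Longrightarrow> x \<in> S \<Longrightarrow> - x \<in> S"
  and subfield_inverse: "is_subfield S \<Longrightarrow> x \<in> S \<Longrightarrow> inverse x \<in> S"
  unfolding is_subfield_def by blast+

lemma subfield_diff: "is_subfield S \<Longrightarrow> x \<in> S \<Longrightarrow> y \<in> S \<Longrightarrow> x - y \<in> S"
  by (metis diff_conv_add_uminus subfield_add subfield_uminus)

lemma subfield_divide: "is_subfield S \<Longrightarrow> x \<in> S \<Longrightarrow> y \<in> S \<Longrightarrow> x / y \<in> S"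
  by (metis divide_inverse subfield_inverse subfield_mult)

lemma subfield_power: "is_subfield S \<Longrightarrow> x \<in> S \<Longrightarrow> x ^ n \<in> S"
  by (induction n) (auto simp: subfield_one subfield_mult)

lemma subfield_power_int: "is_subfield S \<Longrightarrow> x \<in> S \<Longrightarrow> x powi k \<in> S"
  by (simp add: power_int_def subfield_power subfield_inverse)

lemma subfield_of_nat: "is_subfield S \<Longrightarrow> of_nat n \<in> S"
  by (induction n) (auto simp: subfield_zero subfield_one subfield_add)

lemma CHAR_pos_if_finite_subfield:
  fixes F :: "'c::field set"
  assumes "is_subfield F" "finite F"
  shows "CHAR('c) > 0"
proof -
  have "range (\<lambda>k. of_nat k :: 'c) \<subseteq> F"
    using subfield_of_nat[OF assms(1)] by auto
  hence "\<not> inj (\<lambda>k. of_nat k :: 'c)"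
    using assms(2) finite_subset finite_imageD infinite_UNIV_nat by blast
  then obtain i j :: nat where "i < j" "(of_nat i :: 'c) = of_nat j"
    unfolding inj_on_def by (metis UNIV_I linorder_neqE_nat)
  hence "of_nat (j - i) = (0 :: 'c)" "j - i > 0"
    by (simp_all add: of_nat_diff)
  thus ?thesis
    using CHAR_pos_iff by blast
qed

lemma roots_of_unity_nonzero: "z \<in> roots_of_unity \<Longrightarrow> z \<noteq> 0"
  unfolding roots_of_unity_def by (auto simp: power_0_left)

lemma roots_of_unity_mult:
  assumes "z \<in> roots_of_unity" "w \<in> roots_of_unity"
  shows "z * w \<in> roots_of_unity"
proof -
  obtain n m where "n > 0" "z ^ n = 1" "m > 0" "w ^ m = 1"
    using assms unfolding roots_of_unity_def by blast
  moreover have "(z * w) ^ (n * m) = (z ^ n) ^ m * (w ^ m) ^ n"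
    by (simp add: power_mult_distrib power_mult[symmetric] mult.commute)
  ultimately have "(z * w) ^ (n * m) = 1"
    by simp
  thus ?thesis
    unfolding roots_of_unity_def using \<open>n > 0\<close> \<open>m > 0\<close> by (intro CollectI exI[of _ "n * m"]) auto
qed

lemma roots_of_unity_inverse: "z \<in> roots_of_unity \<Longrightarrow> inverse z \<in> roots_of_unity"
  unfolding roots_of_unity_def by (auto simp: power_inverse)

lemma roots_of_unity_divide:
  "z \<in> roots_of_unity \<Longrightarrow> w \<in> roots_of_unity \<Longrightarrow> z / w \<in> roots_of_unity"
  by (simp add: divide_inverse roots_of_unity_mult roots_of_unity_inverse)

lemma roots_of_unity_common_order:
  "finite S \<Longrightarrow> S \<subseteq> roots_of_unity \<Longrightarrow> \<exists>N>0. \<forall>s\<in>S. s ^ N = 1"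
proof (induction S rule: finite_induct)
  case empty
  show ?case by auto
next
  case (insert x S)
  then obtain N where N: "N > 0" "\<forall>s\<in>S. s ^ N = 1"
    by auto
  obtain n where n: "n > 0" "x ^ n = 1"
    using insert.prems unfolding roots_of_unity_def by auto
  have "x ^ (N * n) = 1"
    using n(2) by (simp only: mult.commute[of N] power_mult power_one)
  moreover have "s ^ (N * n) = 1" if "s \<in> S" for s
    using N(2) that by (simp add: power_mult)
  ultimately have "\<forall>s\<in>insert x S. s ^ (N * n) = 1"
    by auto
  thus ?case
    using N n by (intro exI[of _ "N * n"]) auto
qed

lemma finite_roots_of_unity_of_order:
  assumes "N > 0"
  shows "finite {z::'c::field. z ^ N = 1}"
proof -
  define p :: "'c poly" where "p = monom 1 N - 1"
  have poly_p: "poly p z = z ^ N - 1" for z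
    unfolding p_def by (simp add: poly_monom)
  have "poly p 0 \<noteq> 0"
    using assms by (simp add: poly_p power_0_left)
  hence "p \<noteq> 0"
    by auto
  moreover have "{z. z ^ N = 1} = {z. poly p z = 0}"
    by (simp add: poly_p)
  ultimately show ?thesis
    using poly_roots_finite by metis
qed

lemma gen_subgroup_power_eq_1:
  assumes "\<forall>s\<in>S. s ^ N = 1" "z \<in> gen_subgroup S"
  shows "z ^ N = 1"
  using assms(2)
  by induction (use assms(1) in \<open>simp_all add: power_mult_distrib power_inverse\<close>)

lemma finite_gen_subgroup_roots_of_unity:
  assumes "finite S" "S \<subseteq> roots_of_unity"
  shows "finite (gen_subgroup (S::'c::field set))"
proof -
  obtain N where "N > 0" "\<forall>s\<in>S. s ^ N = 1"
    using roots_of_unity_common_order[OF assms] by blast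
  hence "gen_subgroup S \<subseteq> {z. z ^ N = 1}"
    using gen_subgroup_power_eq_1 by blast
  thus ?thesis
    using finite_roots_of_unity_of_order[OF \<open>N > 0\<close>] by (rule finite_subset)
qed

context
  fixes \<rho> :: "rat \<Rightarrow> 'c::field"
  assumes rat_hom_add: "\<And>a b. \<rho> (a + b) = \<rho> a * \<rho> b" and rat_hom_1_nonzero: "\<rho> 1 \<noteq> 0"
begin

lemma rat_hom_0: "\<rho> 0 = 1"
  using rat_hom_add[of 1 0] rat_hom_1_nonzero by simp

lemma rat_hom_uminus: "\<rho> (- a) = inverse (\<rho> a)"
  using rat_hom_add[of "- a" a] rat_hom_0 by (metis add.left_inverse inverse_unique mult.commute)

lemma rat_hom_of_nat_mult: "\<rho> (of_nat n * a) = \<rho> a ^ n"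
  by (induction n) (simp_all add: rat_hom_0 rat_hom_add algebra_simps)

lemma rat_hom_of_int: "\<rho> (of_int k) = \<rho> 1 powi k"
proof (cases "k \<ge> 0")
  case True
  then obtain n where "k = int n"
    by (metis nonneg_eq_int)
  thus ?thesis
    using rat_hom_of_nat_mult[of n 1] by (simp add: power_int_def)
next
  case False
  then obtain n where "k = - int n"
    by (metis nonpos_int_cases linorder_not_le order_less_imp_le)
  thus ?thesis
    using rat_hom_uminus[of "of_nat n"] rat_hom_of_nat_mult[of n 1] by (simp add: power_int_def power_inverse)
qed

end

lemma last_maximum_index:
  fixes w :: "nat \<Rightarrow> 'a::linorder"
  obtains j where "j \<le> n" "\<And>i. i \<le> n \<Longrightarrow> w i \<le> w j" "\<And>i. j < i \<Longrightarrow> i \<le> n \<Longrightarrow> w i < w j"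
proof -
  define M where "M = Max (w ` {..n})"
  define J where "J = {j. j \<le> n \<and> w j = M}"
  have "finite J"
    unfolding J_def by auto
  have le_M: "w i \<le> M" if "i \<le> n" for i
    unfolding M_def using that by (intro Max_ge) auto
  have "M \<in> w ` {..n}"
    unfolding M_def by (intro Max_in) auto
  hence "Max J \<in> J"
    using \<open>finite J\<close> unfolding J_def by (intro Max_in) auto
  moreover have "w i < M" if "Max J < i" "i \<le> n" for i
  proof -
    have "i \<notin> J"
      using Max_ge[OF \<open>finite J\<close>, of i] that(1) by linarith
    thus ?thesis
      using le_M[OF that(2)] that(2) unfolding J_def by fastforce
  qed
  ultimately show thesis
    using that[of "Max J"] le_M unfolding J_def by auto
qed

lemma eq_powr_divide_if_power_eq:
  fixes x c :: real
  assumes "x ^ n = c powr m" "n > 0" "x \<ge> 0" "c > 0"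
  shows "x = c powr (m / n)"
proof -
  have "(c powr (m / n)) ^ n = c powr m"
    using assms(2,4) by (simp add: powr_power)
  thus ?thesis
    using assms power_eq_iff_eq_base[of n x "c powr (m / n)"] by simp
qed

section \<open>Nonarchimedean absolute values\<close>

locale nonarch_field =
  fixes absv :: "'c::field \<Rightarrow> real"
  assumes abs_value: "abs_value_on UNIV absv"
    and absv_add_le_max: "absv (x + y) \<le> max (absv x) (absv y)"
begin

lemma absv_nonneg [simp]: "absv x \<ge> 0"
  using abs_value unfolding abs_value_on_def by blast

lemma absv_eq_0_iff [simp]: "absv x = 0 \<longleftrightarrow> x = 0"
  using abs_value unfolding abs_value_on_def by blast

lemma absv_0 [simp]: "absv 0 = 0"
  by simp

lemma absv_pos_iff: "absv x > 0 \<longleftrightarrow> x \<noteq> 0"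
  using absv_nonneg[of x] absv_eq_0_iff[of x] by linarith

lemma absv_mult: "absv (x * y) = absv x * absv y"
  using abs_value unfolding abs_value_on_def by blast

lemma absv_1 [simp]: "absv 1 = 1"
  using absv_mult[of 1 1] by (metis absv_eq_0_iff mult_cancel_left1 one_neq_zero)

lemma absv_inverse: "absv (inverse x) = inverse (absv x)"
proof (cases "x = 0")
  case False
  hence "absv x * absv (inverse x) = 1"
    by (simp add: absv_mult[symmetric])
  thus ?thesis
    by (metis inverse_unique)
qed simp

lemma absv_divide: "absv (x / y) = absv x / absv y"
  by (simp add: divide_inverse absv_mult absv_inverse)

lemma absv_power: "absv (x ^ n) = absv x ^ n"
  by (induction n) (simp_all add: absv_mult)

lemma absv_power_int: "absv (x powi k) = absv x powi k"
  by (simp add: power_int_def absv_power absv_inverse power_inverse)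

lemma absv_minus [simp]: "absv (- x) = absv x"
proof -
  have "absv (- 1) ^ 2 = 1 ^ 2"
    by (simp add: absv_power[symmetric])
  hence "absv (- 1) = 1"
    using power_eq_iff_eq_base[of 2 "absv (- 1)" 1] by simp
  thus ?thesis
    using absv_mult[of "- 1" x] by simp
qed

lemma absv_minus_commute: "absv (x - y) = absv (y - x)"
  by (metis absv_minus minus_diff_eq)

lemma absv_diff_le_max: "absv (x - y) \<le> max (absv x) (absv y)"
  using absv_add_le_max[of x "- y"] by simp

lemma absv_add_lt: "absv x < e \<Longrightarrow> absv y < e \<Longrightarrow> absv (x + y) < e"
  using absv_add_le_max[of x y] by linarith

lemma absv_diff_trans_lt: "absv (x - y) < e \<Longrightarrow> absv (y - z) < e \<Longrightarrow> absv (x - z) < e"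
  using absv_add_lt[of "x - y" e "y - z"] by simp

lemma absv_add_eq_max:
  assumes "absv x \<noteq> absv y"
  shows "absv (x + y) = max (absv x) (absv y)"
proof -
  have "absv x \<le> max (absv (x + y)) (absv y)" "absv y \<le> max (absv (x + y)) (absv x)"
    using absv_add_le_max[of "x + y" "- y"] absv_add_le_max[of "x + y" "- x"] by simp_all
  thus ?thesis
    using absv_add_le_max[of x y] assms by linarith
qed

lemma absv_add_eq_left: "absv y < absv x \<Longrightarrow> absv (x + y) = absv x"
  using absv_add_eq_max[of x y] by simp

lemma absv_eq_if_diff_less: "absv (x - y) < absv x \<Longrightarrow> absv y = absv x"
  using absv_add_eq_left[of "y - x" x] by (simp add: absv_minus_commute)

lemma absv_sum_lt:
  assumes "\<And>i. i \<in> I \<Longrightarrow> absv (f i) < b" "b > 0"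
  shows "absv (sum f I) < b"
  using assms by (induction I rule: infinite_finite_induct) (auto intro: absv_add_lt)

lemma absv_sum_eq_Max:
  assumes "finite I" "I \<noteq> {}" "\<And>i. i \<in> I \<Longrightarrow> t i \<noteq> 0" "inj_on (\<lambda>i. absv (t i)) I"
  shows "absv (sum t I) = Max ((\<lambda>i. absv (t i)) ` I)"
  using assms
proof (induction I rule: finite_ne_induct)
  case (singleton x)
  thus ?case by simp
next
  case (insert x I)
  have IH: "absv (sum t I) = Max ((\<lambda>i. absv (t i)) ` I)"
    using insert by (auto intro: inj_on_subset)
  have "Max ((\<lambda>i. absv (t i)) ` I) \<in> (\<lambda>i. absv (t i)) ` I"
    using insert.hyps(1,2) by (intro Max_in) auto
  then obtain i where i: "i \<in> I" "Max ((\<lambda>i. absv (t i)) ` I) = absv (t i)"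
    by auto
  have "absv (t x) \<noteq> absv (t i)"
    using insert.prems(2) i \<open>x \<notin> I\<close> unfolding inj_on_def by force
  hence "absv (t x + sum t I) = max (absv (t x)) (absv (sum t I))"
    using IH i by (intro absv_add_eq_max) auto
  thus ?case
    using insert IH by simp
qed

lemma absv_prod_list: "absv (prod_list xs) = prod_list (map absv xs)"
  by (induction xs) (simp_all add: absv_mult)

lemma absv_eq_1_if_power_eq:
  assumes "x \<noteq> 0" "x ^ i = x ^ j" "i < j"
  shows "absv x = 1"
proof -
  have "absv x ^ i = absv x ^ i * absv x ^ (j - i)"
    using assms(2,3) by (metis absv_power le_add_diff_inverse less_imp_le power_add)
  moreover have "absv x ^ i \<noteq> 0"
    using assms(1) by simp
  ultimately have "absv x ^ (j - i) = 1 ^ (j - i)"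
    by (metis mult_cancel_left1 power_one)
  thus ?thesis
    using assms(3) power_eq_iff_eq_base[of "j - i" "absv x" 1] by simp
qed

lemma absv_root_of_unity:
  assumes "z \<in> roots_of_unity"
  shows "absv z = 1"
proof -
  obtain n where "n > 0" "z ^ 0 = z ^ n"
    using assms unfolding roots_of_unity_def by auto
  thus ?thesis
    using absv_eq_1_if_power_eq roots_of_unity_nonzero[OF assms] by blast
qed

lemma absv_power_minus_1_lt:
  assumes "absv (x - 1) < 1"
  shows "absv (x ^ j - 1) < 1"
proof (induction j)
  case 0
  show ?case by simp
next
  case (Suc j)
  have "absv x = 1"
    using absv_eq_if_diff_less[of 1 x] assms by (simp add: absv_minus_commute)
  hence "absv (x * (x ^ j - 1)) < 1"
    using Suc by (simp add: absv_mult)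
  moreover have "x ^ Suc j - 1 = x * (x ^ j - 1) + (x - 1)"
    by (simp add: algebra_simps)
  ultimately show ?case
    using assms absv_add_lt by metis
qed

lemma absv_of_nat_eq_1:
  assumes "CHAR('c) > 0" "\<not> CHAR('c) dvd m"
  shows "absv (of_nat m :: 'c) = 1"
proof -
  have p: "prime CHAR('c)"
    using assms(1) prime_CHAR_semidom by blast
  have "(of_nat k :: 'c) ^ CHAR('c) = of_nat k" for k
  proof (induction k)
    case 0
    show ?case using assms(1) by simp
  next
    case (Suc k)
    thus ?case using freshmans_dream[OF p refl, of 1 "of_nat k"] by simp
  qed
  moreover have "(of_nat m :: 'c) \<noteq> 0"
    using assms(2) of_nat_eq_0_iff_char_dvd by blast
  ultimately show ?thesis
    using absv_eq_1_if_power_eq[of "of_nat m" 1 "CHAR('c)"] prime_gt_1_nat[OF p] by simp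
qed

text \<open>Otherwise \<open>\<Sum>\<^sub>i\<^sub><\<^sub>m \<xi>\<^sup>i = 0\<close>, although this sum is congruent to the unit \<open>m\<close>.\<close>
lemma root_of_unity_prime_to_char_eq_1_if_close:
  assumes "CHAR('c) > 0" "\<xi> ^ m = 1" "\<not> CHAR('c) dvd m" "absv (\<xi> - 1) < 1"
  shows "\<xi> = 1"
proof (rule ccontr)
  assume "\<xi> \<noteq> 1"
  moreover have "(\<xi> - 1) * (\<Sum>i<m. \<xi> ^ i) = 0"
    using power_diff_1_eq[of \<xi> m] assms(2) by simp
  ultimately have "(\<Sum>i<m. \<xi> ^ i - 1) = - of_nat m"
    by (simp add: sum_subtractf)
  moreover have "absv (\<Sum>i<m. \<xi> ^ i - 1) < 1"
    using absv_power_minus_1_lt[OF assms(4)] by (intro absv_sum_lt) auto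
  ultimately show False
    using absv_of_nat_eq_1[OF assms(1,3)] by simp
qed

text \<open>Write the order of \<open>\<eta>\<close> as \<open>p\<^sup>k m\<close> with \<open>p\<close> the characteristic, \<open>p\<close> not dividing \<open>m\<close>.  Since
  \<open>\<eta>\<^bsup>p\<^sup>k\<^esup> - 1 = (\<eta> - 1)\<^bsup>p\<^sup>k\<^esup>\<close>, the root \<open>\<eta>\<^bsup>p\<^sup>k\<^esup>\<close> of order dividing \<open>m\<close> is still close to \<open>1\<close>.\<close>
lemma root_of_unity_eq_1_if_close:
  assumes "CHAR('c) > 0" "\<eta> \<in> roots_of_unity" "absv (\<eta> - 1) < 1"
  shows "\<eta> = 1"
proof -
  define p where "p = CHAR('c)"
  have p: "prime p"
    unfolding p_def using assms(1) prime_CHAR_semidom by blast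
  obtain n where n: "n > 0" "\<eta> ^ n = 1"
    using assms(2) unfolding roots_of_unity_def by blast
  have "\<not> is_unit p"
    using p not_prime_unit by blast
  then obtain m where m: "n = p ^ multiplicity p n * m" "\<not> p dvd m"
    using multiplicity_decompose'[of n p] n(1) by blast
  define k where "k = multiplicity p n"
  have frob: "\<eta> ^ (p ^ k) - 1 = (\<eta> - 1) ^ (p ^ k)"
    using freshmans_dream'[OF _ refl, where x = "\<eta> - 1" and y = 1 and n = k] p
    unfolding p_def by simp
  have "absv ((\<eta> - 1) ^ (p ^ k)) \<le> absv (\<eta> - 1) ^ 1"
    unfolding absv_power using assms(3) p by (intro power_decreasing) (auto simp: prime_gt_0_nat Suc_le_eq)
  hence "absv (\<eta> ^ (p ^ k) - 1) < 1"
    using frob assms(3) by simp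
  moreover have "(\<eta> ^ (p ^ k)) ^ m = 1"
    using n(2) m(1) unfolding k_def by (metis power_mult)
  ultimately have "\<eta> ^ (p ^ k) = 1"
    using root_of_unity_prime_to_char_eq_1_if_close assms(1) m(2) unfolding p_def by blast
  thus ?thesis
    using frob by simp
qed

lemma roots_of_unity_eq_if_close:
  assumes "CHAR('c) > 0" "z \<in> roots_of_unity" "w \<in> roots_of_unity" "absv (z - w) < 1"
  shows "z = w"
proof -
  have "w \<noteq> 0"
    using roots_of_unity_nonzero assms(3) by blast
  hence "z / w - 1 = (z - w) / w"
    by (simp add: field_simps)
  hence "absv (z / w - 1) = absv (z - w)"
    using absv_root_of_unity[OF assms(3)] by (simp add: absv_divide)
  hence "z / w = 1"
    using root_of_unity_eq_1_if_close assms roots_of_unity_divide by metis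
  thus ?thesis
    using \<open>w \<noteq> 0\<close> by simp
qed

lemma closure_abs_absv:
  assumes "y \<in> closure_abs absv S" "y \<noteq> 0"
  obtains s where "s \<in> S" "absv s = absv y"
proof -
  have "absv y > 0"
    using assms(2) absv_pos_iff by blast
  then obtain s where "s \<in> S" "absv (y - s) < absv y"
    using assms(1) unfolding closure_abs_def by blast
  thus thesis
    using absv_eq_if_diff_less that by blast
qed

lemma absv_power_quotient_if_absv_eq:
  assumes "absv (a * z ^ i) = absv (b * z ^ j)" "j < i" "z \<noteq> 0" "a \<noteq> 0"
  shows "absv z ^ (i - j) = absv b / absv a"
proof -
  have "absv a * absv z ^ (i - j) * absv z ^ j = absv b * absv z ^ j"
    using assms(1,2) by (simp add: absv_mult absv_power mult.assoc power_add[symmetric])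
  thus ?thesis
    using assms(3,4) by (simp add: field_simps)
qed

text \<open>Two terms of the vanishing sum \<open>\<Sum> p\<^sub>i z\<^sup>i\<close> have equal absolute value, which expresses a
  power of \<open>|z|\<close> through the absolute values of two coefficients.\<close>
lemma algebraic_absv_power_in_value_group:
  assumes "c > 0" and S_values: "\<And>s. s \<in> S \<Longrightarrow> s \<noteq> 0 \<Longrightarrow> \<exists>e::int. absv s = c powr e"
    and "algebraic_over S z" "z \<noteq> 0"
  shows "\<exists>(m::int) (n::nat). n > 0 \<and> absv z ^ n = c powr m"
proof -
  obtain p where p: "p \<noteq> 0" "set (coeffs p) \<subseteq> S" "poly p z = 0"
    using assms(3) unfolding algebraic_over_def by blast
  define I where "I = {i. i \<le> degree p \<and> coeff p i \<noteq> 0}"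
  have I: "finite I" "I \<noteq> {}"
    unfolding I_def using p(1) by auto
  have nz: "coeff p i * z ^ i \<noteq> 0" if "i \<in> I" for i
    using that assms(4) unfolding I_def by auto
  have "(\<Sum>i\<in>I. coeff p i * z ^ i) = poly p z"
    unfolding poly_altdef I_def by (rule sum.mono_neutral_left) auto
  hence "absv (\<Sum>i\<in>I. coeff p i * z ^ i) \<notin> (\<lambda>i. absv (coeff p i * z ^ i)) ` I"
    using p(3) nz assms(4) by auto
  moreover have "Max ((\<lambda>i. absv (coeff p i * z ^ i)) ` I) \<in> (\<lambda>i. absv (coeff p i * z ^ i)) ` I"
    using I by (intro Max_in) auto
  ultimately have "\<not> inj_on (\<lambda>i. absv (coeff p i * z ^ i)) I"
    using absv_sum_eq_Max[OF I nz] by auto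
  then obtain i j where ij: "i \<in> I" "j \<in> I" "j < i"
      "absv (coeff p i * z ^ i) = absv (coeff p j * z ^ j)"
    unfolding inj_on_def by (metis linorder_neqE_nat)
  have "\<exists>e::int. absv (coeff p k) = c powr e" if "k \<in> I" for k
    using that p(1,2) coeff_in_coeffs[of p k] S_values unfolding I_def by auto
  then obtain ei ej :: int where "absv (coeff p i) = c powr ei" "absv (coeff p j) = c powr ej"
    using ij by meson
  moreover have "absv z ^ (i - j) = absv (coeff p j) / absv (coeff p i)"
    using absv_power_quotient_if_absv_eq[OF ij(4,3) assms(4)] ij(1) unfolding I_def by auto
  ultimately have "absv z ^ (i - j) = c powr of_int (ej - ei)"
    by (simp add: powr_diff)
  thus ?thesis
    using ij(3) zero_less_diff by blast
qed

lemma absv_rat_hom: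
  assumes hom: "\<And>a b. \<rho> (a + b) = \<rho> a * \<rho> b" and "\<rho> 1 \<noteq> 0"
  shows "absv (\<rho> a) = absv (\<rho> 1) powr of_rat a"
proof -
  obtain r s where rs: "quotient_of a = (r, s)"
    by fastforce
  have "s > 0" "a = of_int r / of_int s"
    using quotient_of_denom_pos[OF rs] quotient_of_div[OF rs] by simp_all
  hence "\<rho> a ^ nat s = \<rho> 1 powi r"
    using rat_hom_of_nat_mult[OF hom assms(2), of "nat s" a] rat_hom_of_int[OF hom assms(2), of r] by simp
  hence "absv (\<rho> a) ^ nat s = absv (\<rho> 1) powr of_int r"
    using assms(2) by (simp add: absv_power[symmetric] absv_power_int powr_real_of_int' absv_pos_iff)
  hence "absv (\<rho> a) = absv (\<rho> 1) powr (of_int r / of_nat (nat s))"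
    using \<open>s > 0\<close> assms(2) by (intro eq_powr_divide_if_power_eq) (auto simp: absv_pos_iff)
  thus ?thesis
    using \<open>s > 0\<close> \<open>a = _\<close> by (simp add: of_rat_divide)
qed

end

locale nonarch_alg_closed_field = nonarch_field absv for absv :: "'c::field \<Rightarrow> real" +
  assumes poly_has_root: "degree (p :: 'c poly) \<ge> 1 \<Longrightarrow> \<exists>x. poly p x = 0"
begin

lemma poly_eq_lead_coeff_prod_linear:
  "(p :: 'c poly) \<noteq> 0 \<Longrightarrow> \<exists>rs. \<forall>x. poly p x = lead_coeff p * prod_list (map (\<lambda>r. x - r) rs)"
proof (induction "degree p" arbitrary: p)
  case 0
  hence "\<forall>x. poly p x = lead_coeff p"
    by (metis degree_0_id poly_pCons poly_0 mult_zero_right add_0_right)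
  thus ?case
    by (intro exI[of _ "[]"]) simp
next
  case (Suc n)
  then obtain r where "poly p r = 0"
    using poly_has_root[of p] by auto
  then obtain s where s: "p = [:- r, 1:] * s"
    using poly_eq_0_iff_dvd by (metis dvdE)
  have "s \<noteq> 0"
    using Suc.prems s by auto
  moreover have "degree s = n"
    using Suc.hyps(2) \<open>s \<noteq> 0\<close> unfolding s by (subst (asm) degree_mult_eq) auto
  ultimately obtain rs where rs: "\<forall>x. poly s x = lead_coeff s * prod_list (map (\<lambda>r. x - r) rs)"
    using Suc.hyps(1)[of s] by auto
  have "lead_coeff p = lead_coeff s"
    unfolding s lead_coeff_mult by simp
  moreover have "poly p x = (x - r) * poly s x" for x
    unfolding s by (simp add: algebra_simps)
  ultimately show ?case
    using rs by (intro exI[of _ "r # rs"]) simp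
qed

text \<open>If \<open>|y - \<zeta>| \<ge> 1\<close> for all roots \<open>\<zeta>\<close> of \<open>X\<^sup>N - 1\<close>, then \<open>|y\<^sup>N - 1| = \<Prod>|y - \<zeta>| \<ge> 1\<close>.\<close>
lemma exists_root_of_unity_close:
  assumes "absv (y ^ N - 1) < 1" "N > 0"
  shows "\<exists>\<zeta>. \<zeta> ^ N = 1 \<and> absv (y - \<zeta>) < 1"
proof -
  define p :: "'c poly" where "p = monom 1 N + [:- 1:]"
  have poly_p: "poly p x = x ^ N - 1" for x
    unfolding p_def by (simp add: poly_monom)
  have "degree p = N"
    unfolding p_def using assms(2) by (subst degree_add_eq_left) (auto simp: degree_monom_eq)
  hence "lead_coeff p = 1"
    using assms(2) unfolding p_def by (cases N) simp_all
  hence "p \<noteq> 0"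
    by auto
  then obtain rs where rs: "\<forall>x. poly p x = prod_list (map (\<lambda>r. x - r) rs)"
    using poly_eq_lead_coeff_prod_linear[OF \<open>p \<noteq> 0\<close>] \<open>lead_coeff p = 1\<close> by auto
  have "\<exists>r\<in>set rs. absv (y - r) < 1"
  proof (rule ccontr)
    assume "\<not> ?thesis"
    hence "1 \<le> prod_list (map absv (map (\<lambda>r. y - r) rs))"
      by (induction rs) (auto simp: not_less intro: order.trans[OF _ mult_mono[of 1 _ 1, simplified]])
    thus False
      using assms(1) rs poly_p by (simp add: absv_prod_list)
  qed
  then obtain r where "r \<in> set rs" "absv (y - r) < 1"
    by blast
  moreover have "r ^ N = 1"
    using rs poly_p \<open>r \<in> set rs\<close> by (metis eq_iff_diff_eq_0 prod_list_zero_iff imageI list.set_map diff_self)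
  ultimately show ?thesis
    by blast
qed

end

section \<open>The Drinfeld setting and its value group\<close>

locale drinfeld =
  fixes absv :: "'c::field \<Rightarrow> real" and F K :: "'c set" and q d :: nat
    and \<pi> :: 'c and \<rho> :: "rat \<Rightarrow> 'c"
  assumes setting: "drinfeld_setting absv F K q d \<pi> \<rho>"

sublocale drinfeld \<subseteq> nonarch_alg_closed_field absv
  using setting unfolding drinfeld_setting_def by unfold_locales blast+

context drinfeld
begin

lemma algebraic_dense: "closure_abs absv {x. algebraic_over (closure_abs absv K) x} = UNIV"
  and K_subfield: "is_subfield K"
  and d_pos: "d \<ge> 1"
  and residue_field_card: "card (residue_field_inf absv K) = q ^ d"
  and pi_in_K: "\<pi> \<in> K"
  and absv_le_pi_if_lt_1: "x \<in> K \<Longrightarrow> absv x < 1 \<Longrightarrow> absv x \<le> absv \<pi>"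
  and rho_1: "\<rho> 1 = \<pi>"
  and rho_add: "\<rho> (a + b) = \<rho> a * \<rho> b"
  using setting unfolding drinfeld_setting_def global_function_field_def by blast+

lemma CHAR_pos: "CHAR('c) > 0"
proof -
  have "is_subfield F" "finite F"
    using setting unfolding drinfeld_setting_def global_function_field_def by blast+
  thus ?thesis
    by (rule CHAR_pos_if_finite_subfield)
qed

lemma q_gt_1: "real q > 1"
proof -
  have "{0, 1} \<subseteq> F" "finite F" "is_subfield F" "card F = q"
    using setting subfield_zero subfield_one
    unfolding drinfeld_setting_def global_function_field_def by auto
  hence "card {0::'c, 1} \<le> q"
    using card_mono by metis
  thus ?thesis
    by simp
qed

lemma q_pos [simp]: "q > 0"
  using q_gt_1 by simp

abbreviation q_inf :: real where
  "q_inf \<equiv> real q powr real d"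

lemma q_inf_gt_1: "q_inf > 1"
  using q_gt_1 d_pos by simp

lemma absv_pi: "absv \<pi> = q_inf powr - 1"
proof -
  have "absv \<pi> = real q powr (- real d)"
    using setting unfolding drinfeld_setting_def by blast
  thus ?thesis
    unfolding powr_powr by simp
qed

lemma pi_nonzero: "\<pi> \<noteq> 0"
  using absv_pi q_inf_gt_1 by auto

lemma absv_pi_power_int: "absv (\<pi> powi e) = q_inf powr (- of_int e)"
proof -
  have "q_inf powr of_int e = q_inf powi e"
    using q_inf_gt_1 by (intro powr_real_of_int') auto
  moreover have "absv \<pi> = inverse q_inf"
    using absv_pi by (simp add: powr_minus)
  ultimately show ?thesis
    by (simp add: absv_power_int power_int_inverse powr_minus)
qed

text \<open>A suitable power of \<open>\<pi>\<close> moves \<open>|x|\<close> into \<open>[1, q_inf)\<close>; as \<open>\<pi>\<close> is a uniformizer, no element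
  of \<open>K\<close> has absolute value strictly between \<open>|\<pi>|\<close> and \<open>1\<close>, so the result is a unit.\<close>
lemma absv_K_in_value_group:
  assumes "x \<in> K" "x \<noteq> 0"
  shows "\<exists>e::int. absv x = q_inf powr e"
proof -
  define L where "L = log q_inf (absv x)"
  define e where "e = \<lfloor>L\<rfloor>"
  have x: "absv x = q_inf powr L"
    unfolding L_def using q_inf_gt_1 assms(2) by (intro powr_log_cancel[symmetric]) (auto simp: absv_pos_iff)
  define u where "u = inverse (x * \<pi> powi e)"
  have "u \<in> K"
    unfolding u_def using assms(1) pi_in_K K_subfield
    by (intro subfield_inverse subfield_mult subfield_power_int) auto
  have "absv u = q_inf powr (e - L)"
    unfolding u_def x absv_inverse absv_mult absv_pi_power_int
    by (simp add: powr_add[symmetric] powr_minus[symmetric])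
  moreover have "e - L > - 1"
    unfolding e_def by linarith
  ultimately have "absv u > absv \<pi>"
    unfolding absv_pi using q_inf_gt_1 by (metis powr_less_mono)
  hence "\<not> absv u < 1"
    using absv_le_pi_if_lt_1[OF \<open>u \<in> K\<close>] by linarith
  hence "q_inf powr 0 \<le> q_inf powr (e - L)"
    using \<open>absv u = _\<close> by simp
  hence "L \<le> e"
    by (simp only: powr_le_cancel_iff[OF q_inf_gt_1])
  hence "L = e"
    unfolding e_def by linarith
  thus ?thesis
    using x by blast
qed

lemma absv_rational_value:
  assumes "z \<noteq> 0"
  shows "\<exists>a::rat. absv z = q_inf powr of_rat a"
proof -
  obtain s where s: "algebraic_over (closure_abs absv K) s" "absv s = absv z"
    using closure_abs_absv[of z] algebraic_dense assms by blast
  have "\<exists>e::int. absv y = q_inf powr e" if y: "y \<in> closure_abs absv K" "y \<noteq> 0" for y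
  proof -
    obtain s' where s': "s' \<in> K" "absv s' = absv y"
      using closure_abs_absv[OF y] .
    hence "s' \<noteq> 0"
      using y(2) by (metis absv_eq_0_iff)
    thus ?thesis
      using absv_K_in_value_group[OF s'(1)] s'(2) by simp
  qed
  moreover have "s \<noteq> 0"
    using s(2) assms by auto
  ultimately obtain m :: int and n :: nat where "n > 0" "absv s ^ n = q_inf powr m"
    using algebraic_absv_power_in_value_group[OF _ _ s(1)] q_inf_gt_1 by (metis less_trans zero_less_one)
  hence "absv z = q_inf powr (m / n)"
    using s(2) q_inf_gt_1 by (intro eq_powr_divide_if_power_eq) auto
  thus ?thesis
    by (metis of_rat_divide of_rat_of_int_eq of_rat_of_nat_eq)
qed

lemma absv_rho: "absv (\<rho> a) = q_inf powr (- of_rat a)"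
proof -
  have "absv (\<rho> a) = (q_inf powr - 1) powr of_rat a"
    using absv_rat_hom[of \<rho> a, OF rho_add] pi_nonzero unfolding rho_1 absv_pi by blast
  thus ?thesis
    unfolding powr_powr by simp
qed

definition rlog :: "'c \<Rightarrow> rat" where
  "rlog z = (THE a. of_rat a = logq absv q z / real d)"

lemma rlog_eqI:
  assumes "absv z = q_inf powr of_rat a"
  shows "rlog z = a"
proof -
  have "logq absv q z / real d = of_rat a"
    unfolding logq_def assms using q_gt_1 d_pos by (simp add: powr_powr)
  thus ?thesis
    unfolding rlog_def by (intro the_equality) (auto simp: of_rat_eq_iff)
qed

lemma absv_eq_powr_rlog: "z \<noteq> 0 \<Longrightarrow> absv z = q_inf powr of_rat (rlog z)"
  using absv_rational_value rlog_eqI by metis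

lemma absv_unit_part: "z \<noteq> 0 \<Longrightarrow> absv (z * \<rho> (rlog z)) = 1"
  using q_inf_gt_1 by (simp add: absv_mult absv_rho absv_eq_powr_rlog powr_add[symmetric])

lemma sgnC_eq_sgn1: "sgnC absv q d \<rho> z = sgn1 absv (z * \<rho> (rlog z))"
  unfolding sgnC_def rlog_def ..

section \<open>Units are congruent to roots of unity\<close>

definition O_inf :: "'c set" where
  "O_inf = {x \<in> K. absv x \<le> 1}"

lemma O_inf_zero: "0 \<in> O_inf"
  and O_inf_one: "1 \<in> O_inf"
  and O_inf_add: "x \<in> O_inf \<Longrightarrow> y \<in> O_inf \<Longrightarrow> x + y \<in> O_inf"
  and O_inf_mult: "x \<in> O_inf \<Longrightarrow> y \<in> O_inf \<Longrightarrow> x * y \<in> O_inf"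
  unfolding O_inf_def
  using K_subfield subfield_zero subfield_one subfield_add subfield_mult
    absv_add_le_max[of x y]
  by (auto simp: absv_mult mult_le_one)

lemma residue_representatives:
  obtains T where "finite T" "T \<subseteq> K" "\<And>u. u \<in> O_inf \<Longrightarrow> \<exists>t\<in>T. absv (u - t) < 1"
proof -
  define R where "R = {(x, y). x \<in> K \<and> y \<in> K \<and> absv x \<le> 1 \<and> absv y \<le> 1 \<and> absv (x - y) < 1}"
  have "card (O_inf // R) = q ^ d"
    using residue_field_card unfolding residue_field_inf_def O_inf_def R_def .
  hence "finite (O_inf // R)"
    using q_pos by (metis card_ge_0_finite zero_less_power)
  define T where "T = (\<lambda>C. SOME x. x \<in> C) ` (O_inf // R)"
  have rep: "(SOME x. x \<in> R `` {u}) \<in> R `` {u}" if "u \<in> O_inf" for u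
  proof (rule someI)
    show "u \<in> R `` {u}"
      using that unfolding R_def O_inf_def by simp
  qed
  have "T \<subseteq> K"
  proof
    fix t
    assume "t \<in> T"
    then obtain u where "u \<in> O_inf" "t = (SOME x. x \<in> R `` {u})"
      unfolding T_def quotient_def by blast
    thus "t \<in> K"
      using rep[of u] unfolding R_def by auto
  qed
  moreover have "\<exists>t\<in>T. absv (u - t) < 1" if "u \<in> O_inf" for u
    using rep[OF that] that unfolding T_def quotient_def by (auto simp: R_def)
  ultimately show thesis
    using that \<open>finite (O_inf // R)\<close> unfolding T_def by blast
qed

text \<open>If \<open>y\<^sup>k \<equiv> \<Sum> a\<^sub>i y\<^sup>i\<close>, multiply by \<open>y\<close> and replace the top term \<open>a\<^sub>J y\<^bsup>J+1\<^esup>\<close> using the relation.\<close>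
lemma power_congruence_step:
  assumes y: "absv y = 1"
    and c: "\<forall>i<Suc J. c i \<in> O_inf" and rel: "absv (y ^ Suc J - (\<Sum>i<Suc J. c i * y ^ i)) < 1"
    and a: "\<forall>i<Suc J. a i \<in> O_inf" and a_rel: "absv (y ^ k - (\<Sum>i<Suc J. a i * y ^ i)) < 1"
  shows "\<exists>b. (\<forall>i<Suc J. b i \<in> O_inf) \<and> absv (y ^ Suc k - (\<Sum>i<Suc J. b i * y ^ i)) < 1"
proof -
  define b where "b i = (if i = 0 then 0 else a (i - 1)) + a J * c i" for i
  have "b i \<in> O_inf" if "i < Suc J" for i
    unfolding b_def using a c that by (intro O_inf_add O_inf_mult) (auto simp: O_inf_zero)
  have shift: "(\<Sum>i<Suc J. (if i = 0 then 0 else a (i - 1)) * y ^ i) = (\<Sum>i<J. a i * y ^ Suc i)"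
    by (subst sum.lessThan_Suc_shift) simp
  have "y * (\<Sum>i<Suc J. a i * y ^ i) - (\<Sum>i<Suc J. b i * y ^ i)
      = a J * (y ^ Suc J - (\<Sum>i<Suc J. c i * y ^ i))"
    unfolding b_def distrib_right sum.distrib shift
    by (simp add: sum_distrib_left algebra_simps)
  moreover have "absv (a J) \<le> 1"
    using a unfolding O_inf_def by simp
  hence "absv (a J * (y ^ Suc J - (\<Sum>i<Suc J. c i * y ^ i))) < 1"
    using rel unfolding absv_mult by (meson absv_nonneg le_less_trans mult_left_le_one_le)
  ultimately have "absv (y * (\<Sum>i<Suc J. a i * y ^ i) - (\<Sum>i<Suc J. b i * y ^ i)) < 1"
    by simp
  moreover have "absv (y ^ Suc k - y * (\<Sum>i<Suc J. a i * y ^ i)) < 1"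
    using a_rel y by (simp add: absv_mult right_diff_distrib[symmetric])
  ultimately show ?thesis
    using absv_diff_trans_lt \<open>\<And>i. i < Suc J \<Longrightarrow> b i \<in> O_inf\<close> by blast
qed

lemma power_congruent_combination:
  assumes y: "absv y = 1"
    and c: "\<forall>i<Suc J. c i \<in> O_inf" and rel: "absv (y ^ Suc J - (\<Sum>i<Suc J. c i * y ^ i)) < 1"
  shows "\<exists>a. (\<forall>i<Suc J. a i \<in> O_inf) \<and> absv (y ^ k - (\<Sum>i<Suc J. a i * y ^ i)) < 1"
proof (induction k)
  case 0
  have "(\<Sum>i<Suc J. (if i = 0 then 1 else 0) * y ^ i) = 1"
    by (subst sum.lessThan_Suc_shift) simp
  thus ?case
    using O_inf_zero O_inf_one by (intro exI[of _ "\<lambda>i. if i = 0 then 1 else 0"]) auto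
next
  case (Suc k)
  thus ?case
    using power_congruence_step[OF y c rel] by blast
qed

lemma combination_close_to_representatives:
  assumes y: "absv y = 1" and T: "\<And>u. u \<in> O_inf \<Longrightarrow> \<exists>t\<in>T. absv (u - t) < 1"
    and a: "\<forall>i<j. a i \<in> O_inf"
  shows "\<exists>t \<in> PiE {..<j} (\<lambda>_. T). absv ((\<Sum>i<j. a i * y ^ i) - (\<Sum>i<j. t i * y ^ i)) < 1"
proof -
  have "\<exists>x. i < j \<longrightarrow> x \<in> T \<and> absv (a i - x) < 1" for i
    using T a by blast
  then obtain t where t: "t i \<in> T" "absv (a i - t i) < 1" if "i < j" for i
    by metis
  define t' where "t' = restrict t {..<j}"
  have "t' \<in> PiE {..<j} (\<lambda>_. T)"
    unfolding t'_def using t(1) by auto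
  moreover have "(\<Sum>i<j. a i * y ^ i) - (\<Sum>i<j. t' i * y ^ i) = (\<Sum>i<j. (a i - t i) * y ^ i)"
    unfolding t'_def by (simp add: sum_subtractf algebra_simps)
  moreover have "absv (\<Sum>i<j. (a i - t i) * y ^ i) < 1"
    using t(2) y by (intro absv_sum_lt) (auto simp: absv_mult absv_power)
  ultimately show ?thesis
    by metis
qed

text \<open>The powers of \<open>y\<close> are congruent to finitely many combinations of \<open>1, \<dots>, y\<^sup>J\<close> with
  coefficients in a set of residue representatives, so two of them agree modulo the maximal ideal.\<close>
lemma power_close_1_if_integral:
  assumes y: "absv y = 1"
    and c: "\<forall>i<Suc J. c i \<in> O_inf" and rel: "absv (y ^ Suc J - (\<Sum>i<Suc J. c i * y ^ i)) < 1"
  shows "\<exists>N>0. absv (y ^ N - 1) < 1"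
proof -
  obtain T where T: "finite T" "\<And>u. u \<in> O_inf \<Longrightarrow> \<exists>t\<in>T. absv (u - t) < 1"
    using residue_representatives by metis
  define \<Phi> where "\<Phi> = PiE {..<Suc J} (\<lambda>_. T)"
  have "\<exists>t\<in>\<Phi>. absv (y ^ k - (\<Sum>i<Suc J. t i * y ^ i)) < 1" for k
  proof -
    obtain a where a: "\<forall>i<Suc J. a i \<in> O_inf" "absv (y ^ k - (\<Sum>i<Suc J. a i * y ^ i)) < 1"
      using power_congruent_combination[OF y c rel] by blast
    thus ?thesis
      using combination_close_to_representatives[OF y T(2) a(1)] absv_diff_trans_lt
      unfolding \<Phi>_def by blast
  qed
  then obtain \<phi> where \<phi>: "\<And>k. \<phi> k \<in> \<Phi>" "\<And>k. absv (y ^ k - (\<Sum>i<Suc J. \<phi> k i * y ^ i)) < 1"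
    by metis
  have "finite \<Phi>"
    unfolding \<Phi>_def using T(1) by (intro finite_PiE) auto
  hence "\<not> inj \<phi>"
    using \<phi>(1) by (metis finite_imageD finite_subset image_subsetI infinite_UNIV_nat)
  then obtain k1 k2 where k: "k1 < k2" "\<phi> k1 = \<phi> k2"
    unfolding inj_on_def by (metis UNIV_I linorder_neqE_nat)
  have "absv (y ^ k1 - y ^ k2) < 1"
    using absv_diff_trans_lt[OF \<phi>(2)[of k1]] \<phi>(2)[of k2] k(2) absv_minus_commute by metis
  moreover have "y ^ k2 - y ^ k1 = y ^ k1 * (y ^ (k2 - k1) - 1)"
    using k(1) by (simp add: algebra_simps power_add[symmetric])
  ultimately have "absv (y ^ (k2 - k1) - 1) < 1"
    using y absv_minus_commute[of "y ^ k1"] by (simp add: absv_mult absv_power)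
  thus ?thesis
    using k(1) zero_less_diff by blast
qed

lemma approximation_in_K:
  assumes "\<And>i. e i \<noteq> 0 \<Longrightarrow> e i \<in> closure_abs absv K" "M > 0"
  obtains f where "\<And>i. f i \<in> K" "\<And>i. absv (e i - f i) < M"
proof -
  have "\<exists>x\<in>K. absv (e i - x) < M" for i
  proof (cases "e i = 0")
    case True
    thus ?thesis
      using K_subfield subfield_zero assms(2) by (intro bexI[of _ 0]) auto
  next
    case False
    thus ?thesis
      using assms unfolding closure_abs_def by blast
  qed
  thus thesis
    using that by metis
qed

text \<open>Approximate the coefficients of a relation of \<open>y\<close> by elements of \<open>K\<close> and divide by the
  coefficient of highest degree among those of maximal absolute value.\<close>
lemma normalized_relation_if_algebraic:
  assumes alg: "algebraic_over (closure_abs absv K) y" and y: "absv y = 1"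
  obtains n j0 g where "j0 \<le> n" "\<And>i. g i \<in> K" "\<And>i. i \<le> n \<Longrightarrow> absv (g i) \<le> 1" "g j0 = 1"
    "\<And>i. j0 < i \<Longrightarrow> i \<le> n \<Longrightarrow> absv (g i) < 1" "absv (\<Sum>i\<le>n. g i * y ^ i) < 1"
proof -
  obtain P where P: "P \<noteq> 0" "set (coeffs P) \<subseteq> closure_abs absv K" "poly P y = 0"
    using alg unfolding algebraic_over_def by blast
  define n where "n = degree P"
  define e where "e = coeff P"
  obtain j0 where j0: "j0 \<le> n" "\<And>i. i \<le> n \<Longrightarrow> absv (e i) \<le> absv (e j0)"
    "\<And>i. j0 < i \<Longrightarrow> i \<le> n \<Longrightarrow> absv (e i) < absv (e j0)"
    using last_maximum_index[of n "\<lambda>i. absv (e i)"] by blast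
  define M where "M = absv (e j0)"
  have "e n \<noteq> 0"
    using P(1) unfolding e_def n_def by simp
  hence "absv (e n) > 0"
    using absv_pos_iff by blast
  hence "M > 0"
    using j0(2)[OF order_refl] unfolding M_def by linarith
  have "e i \<in> closure_abs absv K" if "e i \<noteq> 0" for i
    using P(2) coeff_in_coeffs[OF P(1)] that unfolding e_def by (metis subsetD le_degree)
  then obtain f where f: "\<And>i. f i \<in> K" "\<And>i. absv (e i - f i) < M"
    using approximation_in_K \<open>M > 0\<close> by metis
  have f_le_max: "absv (f i) \<le> max (absv (e i)) (absv (e i - f i))" for i
    using absv_diff_le_max[of "e i" "e i - f i"] by simp
  have f_j0: "absv (f j0) = M"
    using absv_eq_if_diff_less[of "e j0" "f j0"] f(2)[of j0] unfolding M_def by simp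
  have "(\<Sum>i\<le>n. f i * y ^ i) = (\<Sum>i\<le>n. (f i - e i) * y ^ i)"
    using P(3) unfolding e_def n_def poly_altdef by (simp add: sum_subtractf algebra_simps)
  also have "absv \<dots> < M"
    using f(2) y \<open>M > 0\<close> absv_minus_commute by (intro absv_sum_lt) (auto simp: absv_mult absv_power)
  finally have f_sum: "absv (\<Sum>i\<le>n. f i * y ^ i) < M" .
  define g where "g i = f i / f j0" for i
  have "f j0 \<noteq> 0"
    using f_j0 \<open>M > 0\<close> by auto
  show thesis
  proof (rule that[of j0 n g])
    show "g i \<in> K" for i
      unfolding g_def using K_subfield f(1) f(1) by (rule subfield_divide)
    show "absv (g i) \<le> 1" if "i \<le> n" for i
      using f_le_max[of i] j0(2)[OF that] f(2)[of i] \<open>M > 0\<close>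
      unfolding g_def absv_divide f_j0 M_def by (simp add: divide_le_eq_1_pos)
    show "absv (g i) < 1" if "j0 < i" "i \<le> n" for i
      using f_le_max[of i] j0(3)[OF that] f(2)[of i] \<open>M > 0\<close>
      unfolding g_def absv_divide f_j0 M_def by (simp add: divide_less_eq_1_pos)
    have "(\<Sum>i\<le>n. g i * y ^ i) = (\<Sum>i\<le>n. f i * y ^ i) / f j0"
      unfolding g_def by (simp add: sum_divide_distrib)
    thus "absv (\<Sum>i\<le>n. g i * y ^ i) < 1"
      using f_sum \<open>M > 0\<close> by (simp only: absv_divide f_j0 divide_less_eq_1_pos)
  qed (use j0 \<open>f j0 \<noteq> 0\<close> g_def in auto)
qed

lemma integral_relation_if_algebraic:
  assumes alg: "algebraic_over (closure_abs absv K) y" and y: "absv y = 1"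
  obtains J c where "\<forall>i<Suc J. c i \<in> O_inf" "absv (y ^ Suc J - (\<Sum>i<Suc J. c i * y ^ i)) < 1"
proof -
  obtain n j0 g where g: "j0 \<le> n" "\<And>i. g i \<in> K" "\<And>i. i \<le> n \<Longrightarrow> absv (g i) \<le> 1" "g j0 = 1"
    "\<And>i. j0 < i \<Longrightarrow> i \<le> n \<Longrightarrow> absv (g i) < 1" "absv (\<Sum>i\<le>n. g i * y ^ i) < 1"
    using normalized_relation_if_algebraic[OF assms] by metis
  have split: "{..n} = {..<j0} \<union> {j0..n}" "{j0..n} = insert j0 {Suc j0..n}"
    using g(1) by auto
  have "(\<Sum>i\<le>n. g i * y ^ i) = (\<Sum>i<j0. g i * y ^ i) + (\<Sum>i\<in>{j0..n}. g i * y ^ i)"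
    unfolding split(1) by (rule sum.union_disjoint) auto
  also have "(\<Sum>i\<in>{j0..n}. g i * y ^ i) = y ^ j0 + (\<Sum>i\<in>{Suc j0..n}. g i * y ^ i)"
    unfolding split(2) using g(4) by (subst sum.insert) auto
  finally have "(\<Sum>i\<le>n. g i * y ^ i)
      = (\<Sum>i<j0. g i * y ^ i) + (y ^ j0 + (\<Sum>i\<in>{Suc j0..n}. g i * y ^ i))" .
  moreover have "absv (\<Sum>i\<in>{Suc j0..n}. g i * y ^ i) < 1"
    using g(5) y by (intro absv_sum_lt) (auto simp: absv_mult absv_power)
  ultimately have rel: "absv (y ^ j0 - (\<Sum>i<j0. - g i * y ^ i)) < 1"
    using absv_diff_le_max[of "\<Sum>i\<le>n. g i * y ^ i" "\<Sum>i\<in>{Suc j0..n}. g i * y ^ i"] g(6)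
    by (simp add: sum_negf algebra_simps)
  have "- g i \<in> O_inf" if "i < j0" for i
    using g(2,3) that g(1) K_subfield subfield_uminus unfolding O_inf_def by auto
  moreover have "j0 \<noteq> 0"
  proof
    assume "j0 = 0"
    thus False
      using rel by simp
  qed
  ultimately show thesis
    using that rel by (metis not0_implies_Suc lessThan_iff)
qed

lemma algebraic_unit_power_close_1:
  assumes "algebraic_over (closure_abs absv K) y" "absv y = 1"
  shows "\<exists>N>0. absv (y ^ N - 1) < 1"
  using integral_relation_if_algebraic[OF assms] power_close_1_if_integral[OF assms(2)] by metis

lemma root_of_unity_close_to_unit:
  assumes "absv w = 1"
  obtains \<zeta> where "\<zeta> \<in> roots_of_unity" "absv (w - \<zeta>) < 1"
proof -
  have "w \<in> closure_abs absv {x. algebraic_over (closure_abs absv K) x}"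
    using algebraic_dense by simp
  then obtain s where s: "algebraic_over (closure_abs absv K) s" "absv (w - s) < 1"
    unfolding closure_abs_def using zero_less_one by blast
  hence "absv s = 1"
    using absv_eq_if_diff_less[of w s] assms by simp
  then obtain N where "N > 0" "absv (s ^ N - 1) < 1"
    using algebraic_unit_power_close_1 s(1) by blast
  then obtain \<zeta> where "\<zeta> ^ N = 1" "absv (s - \<zeta>) < 1"
    using exists_root_of_unity_close by blast
  thus thesis
    using that \<open>N > 0\<close> s(2) absv_diff_trans_lt unfolding roots_of_unity_def by blast
qed

lemma sgn1_close:
  assumes "absv w = 1"
  shows "sgn1 absv w \<in> roots_of_unity" "absv (w - sgn1 absv w) < 1"
proof -
  have close_iff: "absv (w / \<zeta> - 1) = absv (w - \<zeta>)" if "\<zeta> \<in> roots_of_unity" for \<zeta>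
  proof -
    have "w / \<zeta> - 1 = (w - \<zeta>) / \<zeta>"
      using roots_of_unity_nonzero[OF that] by (simp add: field_simps)
    thus ?thesis
      using absv_root_of_unity[OF that] by (simp add: absv_divide)
  qed
  obtain \<zeta> where \<zeta>: "\<zeta> \<in> roots_of_unity" "absv (w - \<zeta>) < 1"
    using root_of_unity_close_to_unit[OF assms] .
  have "\<exists>!\<zeta>. \<zeta> \<in> roots_of_unity \<and> absv (w / \<zeta> - 1) < 1"
  proof (rule ex1I[of _ \<zeta>])
    fix \<xi>
    assume "\<xi> \<in> roots_of_unity \<and> absv (w / \<xi> - 1) < 1"
    thus "\<xi> = \<zeta>"
      using roots_of_unity_eq_if_close[OF CHAR_pos _ \<zeta>(1)] absv_diff_trans_lt[of \<xi> w 1 \<zeta>]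
        close_iff \<zeta>(2) absv_minus_commute by metis
  qed (use \<zeta> close_iff in auto)
  hence "sgn1 absv w \<in> roots_of_unity \<and> absv (w / sgn1 absv w - 1) < 1"
    unfolding sgn1_def by (rule theI')
  thus "sgn1 absv w \<in> roots_of_unity" "absv (w - sgn1 absv w) < 1"
    using close_iff by auto
qed

lemma sgn1_eqI:
  assumes "absv w = 1" "\<zeta> \<in> roots_of_unity" "absv (w - \<zeta>) < 1"
  shows "sgn1 absv w = \<zeta>"
  using roots_of_unity_eq_if_close[OF CHAR_pos sgn1_close(1)[OF assms(1)] assms(2)]
    absv_diff_trans_lt[OF _ assms(3)] sgn1_close(2)[OF assms(1)] absv_minus_commute by metis

section \<open>The sign function\<close>

abbreviation sign :: "'c \<Rightarrow> 'c" where
  "sign \<equiv> sgnC absv q d \<rho>"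

lemma sign_root_of_unity: "z \<noteq> 0 \<Longrightarrow> sign z \<in> roots_of_unity"
  and sign_close: "z \<noteq> 0 \<Longrightarrow> absv (z * \<rho> (rlog z) - sign z) < 1"
  using sgn1_close[OF absv_unit_part] unfolding sgnC_eq_sgn1 by blast+

lemma sign_eqI:
  assumes "z \<noteq> 0" "\<zeta> \<in> roots_of_unity" "absv (z * \<rho> (rlog z) - \<zeta>) < 1"
  shows "sign z = \<zeta>"
  unfolding sgnC_eq_sgn1 using sgn1_eqI[OF absv_unit_part[OF assms(1)] assms(2,3)] .

lemma rlog_eq_if_absv_eq: "x \<noteq> 0 \<Longrightarrow> absv y = absv x \<Longrightarrow> rlog y = rlog x"
  using rlog_eqI absv_eq_powr_rlog by metis

lemma absv_rho_rlog: "z \<noteq> 0 \<Longrightarrow> absv (\<rho> (rlog z)) = inverse (absv z)"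
  using absv_unit_part[of z] by (simp add: absv_mult field_simps)

lemma sign_add_dominated:
  assumes "x \<noteq> 0" "absv y < absv x"
  shows "sign (x + y) = sign x"
proof -
  have "absv (x + y) = absv x"
    using absv_add_eq_left[OF assms(2)] .
  hence "x + y \<noteq> 0"
    using assms(1) by auto
  have rlog_eq: "rlog (x + y) = rlog x"
    using rlog_eq_if_absv_eq[OF assms(1) \<open>absv (x + y) = absv x\<close>] .
  have "absv (y * \<rho> (rlog x)) < 1"
    using assms by (simp add: absv_mult absv_rho_rlog absv_pos_iff field_simps)
  hence "absv ((x * \<rho> (rlog x) - sign x) + y * \<rho> (rlog x)) < 1"
    using sign_close[OF assms(1)] by (intro absv_add_lt)
  hence "absv ((x + y) * \<rho> (rlog (x + y)) - sign x) < 1"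
    unfolding rlog_eq by (simp add: algebra_simps)
  thus ?thesis
    using sign_eqI[OF \<open>x + y \<noteq> 0\<close> sign_root_of_unity[OF assms(1)]] by blast
qed

lemma sign_add_same_absv:
  assumes "x \<noteq> 0" "y \<noteq> 0" "absv y = absv x" "absv (x + y) = absv x"
  shows "absv (sign (x + y) - (sign x + sign y)) < 1"
proof -
  have "x + y \<noteq> 0"
    using assms(1,4) by auto
  have "rlog y = rlog x" "rlog (x + y) = rlog x"
    using rlog_eq_if_absv_eq[OF assms(1)] assms(3,4) by blast+
  hence "absv ((x + y) * \<rho> (rlog x) - sign (x + y)) < 1"
      "absv (x * \<rho> (rlog x) - sign x) < 1" "absv (y * \<rho> (rlog x) - sign y) < 1"
    using sign_close[OF \<open>x + y \<noteq> 0\<close>] sign_close[OF assms(1)] sign_close[OF assms(2)] by simp_all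
  hence "absv (- ((x + y) * \<rho> (rlog x) - sign (x + y))
      + ((x * \<rho> (rlog x) - sign x) + (y * \<rho> (rlog x) - sign y))) < 1"
    by (intro absv_add_lt) (simp_all only: absv_minus)
  moreover have "- ((x + y) * \<rho> (rlog x) - sign (x + y))
      + ((x * \<rho> (rlog x) - sign x) + (y * \<rho> (rlog x) - sign y)) = sign (x + y) - (sign x + sign y)"
    by (simp add: algebra_simps)
  ultimately show ?thesis
    by (simp only:)
qed

lemma sign_mult:
  assumes "x \<noteq> 0" "y \<noteq> 0"
  shows "sign (x * y) = sign x * sign y"
proof -
  have "absv (x * y) = q_inf powr of_rat (rlog x + rlog y)"
    using assms by (simp add: absv_mult absv_eq_powr_rlog powr_add of_rat_add)
  hence "rlog (x * y) = rlog x + rlog y"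
    by (rule rlog_eqI)
  define u v where "u = x * \<rho> (rlog x)" and "v = y * \<rho> (rlog y)"
  have "absv v = 1" "absv (u - sign x) < 1" "absv (v - sign y) < 1"
    unfolding u_def v_def using assms absv_unit_part sign_close by auto
  moreover have "absv (sign x) = 1"
    using absv_root_of_unity[OF sign_root_of_unity[OF assms(1)]] .
  ultimately have "absv ((u - sign x) * v + sign x * (v - sign y)) < 1"
    by (intro absv_add_lt) (simp_all add: absv_mult)
  moreover have "(u - sign x) * v + sign x * (v - sign y) = x * y * \<rho> (rlog (x * y)) - sign x * sign y"
    unfolding \<open>rlog (x * y) = _\<close> u_def v_def rho_add by (simp add: algebra_simps)
  moreover have "x * y \<noteq> 0" "sign x * sign y \<in> roots_of_unity"
    using assms sign_root_of_unity roots_of_unity_mult by auto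
  ultimately show ?thesis
    using sign_eqI by metis
qed

lemma rho_of_int: "\<rho> (of_int k) = \<pi> powi k"
  using rat_hom_of_int[OF rho_add] pi_nonzero unfolding rho_1 by blast

lemma finite_roots_of_unity_close: "finite {\<zeta> \<in> roots_of_unity. absv (\<zeta> - b) < 1}"
proof (cases "\<exists>\<zeta>0. \<zeta>0 \<in> roots_of_unity \<and> absv (\<zeta>0 - b) < 1")
  case True
  then obtain \<zeta>0 where \<zeta>0: "\<zeta>0 \<in> roots_of_unity" "absv (b - \<zeta>0) < 1"
    using absv_minus_commute by metis
  have "{\<zeta> \<in> roots_of_unity. absv (\<zeta> - b) < 1} \<subseteq> {\<zeta>0}"
  proof
    fix \<zeta>
    assume \<zeta>: "\<zeta> \<in> {\<zeta> \<in> roots_of_unity. absv (\<zeta> - b) < 1}"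
    hence "absv (\<zeta> - \<zeta>0) < 1"
      using absv_diff_trans_lt \<zeta>0(2) by blast
    thus "\<zeta> \<in> {\<zeta>0}"
      using roots_of_unity_eq_if_close[OF CHAR_pos] \<zeta> \<zeta>0(1) by blast
  qed
  thus ?thesis
    using finite_subset by blast
next
  case False
  hence "{\<zeta> \<in> roots_of_unity. absv (\<zeta> - b) < 1} = {}"
    by blast
  thus ?thesis
    by (simp only: finite.emptyI)
qed

lemma finite_sign_K: "finite (sign ` (K - {0}))"
proof -
  obtain T where T: "finite T" "T \<subseteq> K" "\<And>u. u \<in> O_inf \<Longrightarrow> \<exists>t\<in>T. absv (u - t) < 1"
    using residue_representatives by metis
  have "sign x \<in> sgn1 absv ` T" if x: "x \<in> K" "x \<noteq> 0" for x
  proof -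
    obtain e :: int where "absv x = q_inf powr e"
      using absv_K_in_value_group[OF x] by blast
    hence "rlog x = of_int e"
      using rlog_eqI[of x "of_int e"] by simp
    define u where "u = x * \<rho> (rlog x)"
    have "absv u = 1"
      unfolding u_def using absv_unit_part[OF x(2)] .
    moreover have "u \<in> K"
      unfolding u_def \<open>rlog x = _\<close> rho_of_int using x(1) pi_in_K K_subfield
      by (intro subfield_mult subfield_power_int)
    ultimately obtain t where t: "t \<in> T" "absv (u - t) < 1"
      using T(3) unfolding O_inf_def by force
    hence "absv t = 1"
      using absv_eq_if_diff_less[of u t] \<open>absv u = 1\<close> by simp
    hence "sgn1 absv u = sgn1 absv t"
      using sgn1_eqI[OF \<open>absv u = 1\<close>] sgn1_close absv_diff_trans_lt[OF t(2)] by blast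
    thus ?thesis
      using t(1) unfolding u_def sgnC_eq_sgn1 by blast
  qed
  hence "sign ` (K - {0}) \<subseteq> sgn1 absv ` T"
    by blast
  thus ?thesis
    using T(1) finite_subset by blast
qed

section \<open>Signs on a finitely generated \<open>K\<close>-span\<close>

definition K_span :: "'c set \<Rightarrow> 'c set" where
  "K_span G = {\<Sum>g\<in>G. c g * g | c. \<forall>g\<in>G. c g \<in> K}"

lemma K_span_empty: "K_span {} = {0}"
  unfolding K_span_def by auto

lemma K_span_diff:
  assumes "v \<in> K_span G" "w \<in> K_span G"
  shows "v - w \<in> K_span G"
proof -
  obtain a b where "\<forall>g\<in>G. a g \<in> K" "v = (\<Sum>g\<in>G. a g * g)" "\<forall>g\<in>G. b g \<in> K" "w = (\<Sum>g\<in>G. b g * g)"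
    using assms unfolding K_span_def by blast
  moreover have "(\<Sum>g\<in>G. a g * g) - (\<Sum>g\<in>G. b g * g) = (\<Sum>g\<in>G. (a g - b g) * g)"
    by (simp add: sum_subtractf algebra_simps)
  ultimately show ?thesis
    unfolding K_span_def using K_subfield subfield_diff by fastforce
qed

lemma K_span_scale:
  assumes "v \<in> K_span G" "a \<in> K"
  shows "a * v \<in> K_span G"
proof -
  obtain c where "\<forall>g\<in>G. c g \<in> K" "v = (\<Sum>g\<in>G. c g * g)"
    using assms(1) unfolding K_span_def by blast
  moreover have "a * (\<Sum>g\<in>G. c g * g) = (\<Sum>g\<in>G. (a * c g) * g)"
    by (simp add: sum_distrib_left algebra_simps)
  ultimately show ?thesis
    unfolding K_span_def using assms(2) K_subfield subfield_mult by fastforce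
qed

lemma K_span_insert:
  assumes "finite G" "g \<notin> G" "w \<in> K_span (insert g G)"
  obtains v a where "v \<in> K_span G" "a \<in> K" "w = v + a * g"
proof -
  obtain c where c: "\<forall>h\<in>insert g G. c h \<in> K" "w = (\<Sum>h\<in>insert g G. c h * h)"
    using assms(3) unfolding K_span_def by blast
  hence "w = (\<Sum>h\<in>G. c h * h) + c g * g"
    using assms(1,2) by (simp add: add.commute)
  moreover have "(\<Sum>h\<in>G. c h * h) \<in> K_span G"
    unfolding K_span_def using c(1) by blast
  ultimately show thesis
    using that c(1) by blast
qed

lemma sign_translate_if_not_minimal:
  assumes V_diff: "\<And>v w. v \<in> V \<Longrightarrow> w \<in> V \<Longrightarrow> v - w \<in> V"
    and "v \<in> V" "v' \<in> V" "absv (g + v') < absv (g + v)"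
  shows "sign (g + v) \<in> sign ` (V - {0})"
proof -
  have "absv ((g + v) + - (g + v')) = absv (g + v)"
    by (rule absv_add_eq_left) (simp only: absv_minus assms(4))
  moreover have "(g + v) + - (g + v') = v - v'"
    by simp
  ultimately have "absv (v - v') = absv (g + v)"
    by (simp only:)
  hence "v - v' \<noteq> 0"
    using assms(4) by auto
  have "sign (g + v) = sign ((v - v') + (g + v'))"
    by (simp add: algebra_simps)
  also have "\<dots> = sign (v - v')"
    using \<open>v - v' \<noteq> 0\<close> \<open>absv (v - v') = _\<close> assms(4) by (intro sign_add_dominated) auto
  finally show ?thesis
    using V_diff[OF assms(2,3)] \<open>v - v' \<noteq> 0\<close> by blast
qed

lemma sign_translate_if_minimal:
  assumes V_diff: "\<And>v w. v \<in> V \<Longrightarrow> w \<in> V \<Longrightarrow> v - w \<in> V"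
    and "v0 \<in> V" "g + v0 \<noteq> 0" "v \<in> V" "absv (g + v) = absv (g + v0)"
  shows "sign (g + v) = sign (g + v0)
    \<or> (\<exists>s \<in> sign ` (V - {0}). absv (sign (g + v) - (sign (g + v0) + s)) < 1)"
proof -
  define u where "u = v - v0"
  have "u \<in> V"
    unfolding u_def using V_diff assms(2,4) by blast
  have g_v: "g + v = (g + v0) + u"
    unfolding u_def by simp
  have "absv u \<le> absv (g + v0)"
    using absv_diff_le_max[of "g + v" "g + v0"] assms(5) unfolding u_def by simp
  then consider "u = 0" | "absv u < absv (g + v0)" | "u \<noteq> 0" "absv u = absv (g + v0)"
    by fastforce
  thus ?thesis
  proof cases
    case 1
    thus ?thesis
      unfolding g_v by simp
  next
    case 2
    thus ?thesis
      unfolding g_v using sign_add_dominated[OF assms(3)] by simp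
  next
    case 3
    hence "absv (sign (g + v) - (sign (g + v0) + sign u)) < 1"
      unfolding g_v using sign_add_same_absv[OF assms(3)] assms(5) g_v by simp
    thus ?thesis
      using \<open>u \<in> V\<close> 3 by blast
  qed
qed

text \<open>The signs on the coset \<open>g + V\<close> come from \<open>V\<close>, from an element \<open>g + v\<^sub>0\<close> of least absolute
  value, or are congruent to a sum of two such signs.\<close>
lemma finite_sign_translate:
  assumes V_diff: "\<And>v w. v \<in> V \<Longrightarrow> w \<in> V \<Longrightarrow> v - w \<in> V"
    and fin: "finite (sign ` (V - {0}))"
  shows "finite ((\<lambda>v. sign (g + v)) ` {v \<in> V. g + v \<noteq> 0})"
proof -
  define X where "X = sign ` (V - {0})"
  define Mn where "Mn = {v \<in> V. g + v \<noteq> 0 \<and> (\<forall>v'\<in>V. absv (g + v) \<le> absv (g + v'))}"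
  define v0 where "v0 = (SOME v. v \<in> Mn)"
  define Y where "Y = X \<union> {sign (g + v0)} \<union> (\<Union>s\<in>X. {\<zeta> \<in> roots_of_unity. absv (\<zeta> - (sign (g + v0) + s)) < 1})"
  have "sign (g + v) \<in> Y" if v: "v \<in> V" "g + v \<noteq> 0" for v
  proof (cases "\<exists>v'\<in>V. absv (g + v') < absv (g + v)")
    case True
    thus ?thesis
      unfolding Y_def X_def using sign_translate_if_not_minimal[OF V_diff v(1)] by blast
  next
    case False
    hence "v \<in> Mn"
      unfolding Mn_def using v by (auto simp: not_less)
    hence "v0 \<in> Mn"
      unfolding v0_def by (rule someI)
    hence "v0 \<in> V" "g + v0 \<noteq> 0" "absv (g + v) = absv (g + v0)"
      using \<open>v \<in> Mn\<close> unfolding Mn_def by (auto intro: order.antisym)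
    then consider "sign (g + v) = sign (g + v0)"
      | s where "s \<in> X" "absv (sign (g + v) - (sign (g + v0) + s)) < 1"
      using sign_translate_if_minimal[OF V_diff _ _ v(1)] unfolding X_def by blast
    thus ?thesis
    proof cases
      case 1
      thus ?thesis
        unfolding Y_def by simp
    next
      case 2
      thus ?thesis
        unfolding Y_def using sign_root_of_unity[OF v(2)] by blast
    qed
  qed
  hence "(\<lambda>v. sign (g + v)) ` {v \<in> V. g + v \<noteq> 0} \<subseteq> Y"
    by blast
  moreover have "finite X"
    unfolding X_def by (rule fin)
  hence "finite Y"
    unfolding Y_def using finite_roots_of_unity_close by blast
  ultimately show ?thesis
    by (rule finite_subset)
qed

lemma finite_sign_K_span_insert:
  assumes "finite G" "g \<notin> G" and fin: "finite (sign ` (K_span G - {0}))"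
  shows "finite (sign ` (K_span (insert g G) - {0}))"
proof -
  define X where "X = sign ` (K_span G - {0})"
  define Y where "Y = (\<lambda>v. sign (g + v)) ` {v \<in> K_span G. g + v \<noteq> 0}"
  have "sign w \<in> X \<union> (\<lambda>(s, t). s * t) ` (sign ` (K - {0}) \<times> Y)"
    if w: "w \<in> K_span (insert g G)" "w \<noteq> 0" for w
  proof -
    obtain v a where va: "v \<in> K_span G" "a \<in> K" "w = v + a * g"
      using K_span_insert[OF assms(1,2) w(1)] .
    show ?thesis
    proof (cases "a = 0")
      case True
      thus ?thesis
        unfolding X_def using va w(2) by auto
    next
      case False
      have "w = a * (g + inverse a * v)"
        using va(3) False by (simp add: algebra_simps)
      moreover have "inverse a * v \<in> K_span G"
        using K_span_scale va(1) K_subfield subfield_inverse va(2) by blast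
      ultimately have "sign w = sign a * sign (g + inverse a * v)" "sign (g + inverse a * v) \<in> Y"
        using sign_mult[OF False] w(2) unfolding Y_def by auto
      moreover have "(sign a, sign (g + inverse a * v)) \<in> sign ` (K - {0}) \<times> Y"
        using False va(2) \<open>sign (g + inverse a * v) \<in> Y\<close> by blast
      ultimately have "sign w \<in> (\<lambda>(s, t). s * t) ` (sign ` (K - {0}) \<times> Y)"
        by (intro rev_image_eqI[of "(sign a, sign (g + inverse a * v))"]) simp_all
      thus ?thesis
        by (rule UnI2)
    qed
  qed
  hence "sign ` (K_span (insert g G) - {0}) \<subseteq> X \<union> (\<lambda>(s, t). s * t) ` (sign ` (K - {0}) \<times> Y)"
    by blast
  moreover have "finite Y"
    unfolding Y_def using finite_sign_translate K_span_diff fin by blast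
  hence "finite (X \<union> (\<lambda>(s, t). s * t) ` (sign ` (K - {0}) \<times> Y))"
    unfolding X_def using fin finite_sign_K by blast
  ultimately show ?thesis
    by (rule finite_subset)
qed

lemma finite_sign_K_span: "finite G \<Longrightarrow> finite (sign ` (K_span G - {0}))"
  by (induction G rule: finite_induct) (simp_all add: K_span_empty finite_sign_K_span_insert)

lemma lattice_subset_K_span:
  assumes "A_lattice absv (ring_A absv F K) r L"
  obtains G where "finite G" "L \<subseteq> K_span G"
proof -
  have "\<exists>G. finite G \<and> G \<subseteq> L \<and> L = {\<Sum>g\<in>G. a g * g | a. \<forall>g\<in>G. a g \<in> ring_A absv F K}"
    using assms unfolding A_lattice_def by (elim conjE) assumption
  then obtain G where G: "finite G" "L = {\<Sum>g\<in>G. a g * g | a. \<forall>g\<in>G. a g \<in> ring_A absv F K}"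
    by blast
  have "\<forall>g\<in>G. a g \<in> K" if "\<forall>g\<in>G. a g \<in> ring_A absv F K" for a
    using that unfolding ring_A_def by blast
  hence "L \<subseteq> K_span G"
    unfolding G(2) K_span_def by blast
  thus thesis
    using that G(1) by blast
qed

end

theorem mainTheorem8:
  fixes absv :: "'c::field \<Rightarrow> real" and F K :: "'c set" and q d :: nat
    and \<pi> :: 'c and \<rho> :: "rat \<Rightarrow> 'c" and r :: nat and L :: "'c set"
  assumes "drinfeld_setting absv F K q d \<pi> \<rho>"
    and "A_lattice absv (ring_A absv F K) r L"
  shows "finite (gen_subgroup (sgnC absv q d \<rho> ` (L - {0})))"
proof -
  interpret drinfeld absv F K q d \<pi> \<rho>
    using assms(1) by unfold_locales
  obtain G where "finite G" "L \<subseteq> K_span G"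
    using lattice_subset_K_span[OF assms(2)] .
  hence "sign ` (L - {0}) \<subseteq> sign ` (K_span G - {0})"
    by blast
  hence "finite (sign ` (L - {0}))"
    using finite_sign_K_span[OF \<open>finite G\<close>] by (rule finite_subset)
  moreover have "sign ` (L - {0}) \<subseteq> roots_of_unity"
    using sign_root_of_unity by blast
  ultimately show ?thesis
    by (rule finite_gen_subgroup_roots_of_unity)
qed

end
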